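(* Let $(\mathsf P,\mathcal O)$ be a semitopology. The following are equivalent: (1) every point $p\in\mathsf P$ is regular; (2) $\mathsf P$ partitions into topen sets: there is a set $\mathcal T$ of pairwise disjoint topen sets with $\bigcup\mathcal T=\mathsf P$; (3) every $X\subseteq\mathsf P$ has a cover by topen sets: there is a set $\mathcal T$ of topen sets with $X\subseteq\bigcup\mathcal T$.
   Context: A semitopology is a pair $(\mathsf P,\mathcal O)$ where $\mathsf P$ is a set and $\mathcal O\subseteq\mathcal P(\mathsf P)$ contains $\varnothing$ and $\mathsf P$ and is closed under arbitrary unions. Write $X\between Y$ when $X\cap Y\neq\varnothing$. A set $T$ is transitive when for all $O,O'\in\mathcal O$, $O\between T\between O'$ implies $O\between O'$; topen means nonempty, open and transitive. Points $p,p'$ are intertwined when every open set containing $p$ intersects every open set containing $p'$; $I(p)$ is the set of points intertwined with $p$; $K(p)=\mathrm{int}(I(p))$ (the union of all open subsets of $I(p)$) is the community of $p$. A point $p$ is regular when $p\in K(p)$ and $K(p)$ is topen. *)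

theory Defs
  imports Main
begin

definition semitopology :: "'a set \<Rightarrow> 'a set set \<Rightarrow> bool" where
  "semitopology P Opn \<longleftrightarrow> Opn \<subseteq> Pow P \<and> {} \<in> Opn \<and> P \<in> Opn \<and>
     (\<forall>S. S \<subseteq> Opn \<longrightarrow> \<Union>S \<in> Opn)"

definition between :: "'a set \<Rightarrow> 'a set \<Rightarrow> bool" where
  "between X Y \<longleftrightarrow> X \<inter> Y \<noteq> {}"

definition transitive_set :: "'a set set \<Rightarrow> 'a set \<Rightarrow> bool" where
  "transitive_set Opn T \<longleftrightarrow>
     (\<forall>A\<in>Opn. \<forall>B\<in>Opn. between A T \<and> between T B \<longrightarrow> between A B)"

definition topen :: "'a set set \<Rightarrow> 'a set \<Rightarrow> bool" where
  "topen Opn T \<longleftrightarrow> T \<noteq> {} \<and> T \<in> Opn \<and> transitive_set Opn T"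

definition intertwined :: "'a set set \<Rightarrow> 'a \<Rightarrow> 'a \<Rightarrow> bool" where
  "intertwined Opn p q \<longleftrightarrow>
     (\<forall>A\<in>Opn. \<forall>B\<in>Opn. p \<in> A \<and> q \<in> B \<longrightarrow> between A B)"

definition intertwined_set :: "'a set \<Rightarrow> 'a set set \<Rightarrow> 'a \<Rightarrow> 'a set" where
  "intertwined_set P Opn p = {q \<in> P. intertwined Opn p q}"

definition interior_st :: "'a set set \<Rightarrow> 'a set \<Rightarrow> 'a set" where
  "interior_st Opn X = \<Union>{A \<in> Opn. A \<subseteq> X}"

definition community :: "'a set \<Rightarrow> 'a set set \<Rightarrow> 'a \<Rightarrow> 'a set" where
  "community P Opn p = interior_st Opn (intertwined_set P Opn p)"

definition regular_point :: "'a set \<Rightarrow> 'a set set \<Rightarrow> 'a \<Rightarrow> bool" where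
  "regular_point P Opn p \<longleftrightarrow> p \<in> community P Opn p \<and> topen Opn (community P Opn p)"

end

theory Submission
  imports Defs
begin

text \<open>A topen set lies inside the community of each of its points, and a community meeting
a topen set inherits its transitivity; so a point is regular exactly when it lies in some
topen set. Under regularity two communities that meet are both contained in their topen
union, hence equal, and the communities of all points form the required partition.\<close>

lemma between_commute: "between X Y \<longleftrightarrow> between Y X"
  unfolding between_def by blast

lemma community_subset: "community P Opn p \<subseteq> P"
  unfolding community_def interior_st_def intertwined_set_def by blast

lemma intertwined_if_mem_community:
  "x \<in> community P Opn p \<Longrightarrow> intertwined Opn p x"
  unfolding community_def interior_st_def intertwined_set_def by blast

lemma open_Union: "semitopology P Opn \<Longrightarrow> S \<subseteq> Opn \<Longrightarrow> \<Union>S \<in> Opn"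
  unfolding semitopology_def by blast

lemma open_Un: "semitopology P Opn \<Longrightarrow> A \<in> Opn \<Longrightarrow> B \<in> Opn \<Longrightarrow> A \<union> B \<in> Opn"
  using open_Union[of P Opn "{A, B}"] by simp

lemma open_community: "semitopology P Opn \<Longrightarrow> community P Opn p \<in> Opn"
  unfolding community_def interior_st_def by (rule open_Union) auto

lemma intertwined_if_mem_transitive:
  assumes "transitive_set Opn T" "x \<in> T" "y \<in> T"
  shows "intertwined Opn x y"
  using assms unfolding intertwined_def transitive_set_def between_def by blast

lemma topen_subset_community:
  assumes st: "semitopology P Opn" and T: "topen Opn T" and x: "x \<in> T"
  shows "T \<subseteq> community P Opn x"
proof -
  have T_open: "T \<in> Opn" and T_trans: "transitive_set Opn T"
    using T unfolding topen_def by auto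
  have "T \<subseteq> P" using st T_open unfolding semitopology_def by auto
  with T_trans x have "T \<subseteq> intertwined_set P Opn x"
    unfolding intertwined_set_def by (auto intro: intertwined_if_mem_transitive)
  with T_open show ?thesis unfolding community_def interior_st_def by blast
qed

lemma regular_point_if_mem_topen:
  assumes st: "semitopology P Opn" and T: "topen Opn T" and p: "p \<in> T"
  shows "regular_point P Opn p"
proof -
  have T_open: "T \<in> Opn" and T_trans: "transitive_set Opn T"
    using T unfolding topen_def by auto
  have meets_T: "between A T" if A: "A \<in> Opn" and "between A (community P Opn p)" for A
  proof -
    obtain a where "a \<in> A" "intertwined Opn p a"
      using \<open>between A (community P Opn p)\<close> intertwined_if_mem_community
      unfolding between_def by (meson disjoint_iff)
    with T_open p A show ?thesis
      unfolding intertwined_def by (metis between_commute)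
  qed
  have "transitive_set Opn (community P Opn p)"
    unfolding transitive_set_def
  proof (intro ballI impI)
    fix A B assume "A \<in> Opn" "B \<in> Opn"
      and "between A (community P Opn p) \<and> between (community P Opn p) B"
    then have "between A T" "between T B"
      using meets_T between_commute by metis+
    with T_trans \<open>A \<in> Opn\<close> \<open>B \<in> Opn\<close> show "between A B"
      unfolding transitive_set_def by blast
  qed
  moreover have "p \<in> community P Opn p"
    using topen_subset_community[OF st T p] p by blast
  ultimately show ?thesis
    using open_community[OF st] unfolding regular_point_def topen_def by blast
qed

lemma all_regular_iff_covered_by_topens:
  assumes "semitopology P Opn"
  shows "(\<forall>p\<in>P. regular_point P Opn p) \<longleftrightarrow> P \<subseteq> \<Union>{T. topen Opn T}"
  using regular_point_if_mem_topen[OF assms]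
  unfolding regular_point_def by blast

lemma topen_Un:
  assumes st: "semitopology P Opn" and T1: "topen Opn T1" and T2: "topen Opn T2"
    and meet: "T1 \<inter> T2 \<noteq> {}"
  shows "topen Opn (T1 \<union> T2)"
proof -
  have open1: "T1 \<in> Opn" and trans1: "transitive_set Opn T1"
    and open2: "T2 \<in> Opn" and trans2: "transitive_set Opn T2"
    using T1 T2 unfolding topen_def by auto
  have T1_T2: "between T1 T2" "between T2 T1" using meet unfolding between_def by auto
  have "transitive_set Opn (T1 \<union> T2)"
    unfolding transitive_set_def
  proof (intro ballI impI)
    fix A B assume A: "A \<in> Opn" and B: "B \<in> Opn"
      and "between A (T1 \<union> T2) \<and> between (T1 \<union> T2) B"
    then have A_meets: "between A T1 \<or> between A T2"
      and B_meets: "between T1 B \<or> between T2 B"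
      unfolding between_def by auto
    \<comment> \<open>each \<open>Ti\<close> is itself an open set meeting the other one, so it serves as a bridge\<close>
    have "between T1 B \<and> between T2 B"
      using B_meets trans1 trans2 open1 open2 B T1_T2
      unfolding transitive_set_def by blast
    with A_meets trans1 trans2 A B show "between A B"
      unfolding transitive_set_def by blast
  qed
  with open_Un[OF st open1 open2] T1 show ?thesis unfolding topen_def by blast
qed

lemma community_eq_if_mem_community:
  assumes st: "semitopology P Opn" and regular: "\<forall>p\<in>P. regular_point P Opn p"
    and p: "p \<in> P" and x: "x \<in> community P Opn p"
  shows "community P Opn p = community P Opn x"
proof -
  have "x \<in> P" using subsetD[OF community_subset x] .
  then have Kp: "topen Opn (community P Opn p)" and Kx: "topen Opn (community P Opn x)"
    and p_Kp: "p \<in> community P Opn p" and x_Kx: "x \<in> community P Opn x"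
    using regular p unfolding regular_point_def by blast+
  have "topen Opn (community P Opn p \<union> community P Opn x)"
    using topen_Un[OF st Kp Kx] x x_Kx by blast
  from topen_subset_community[OF st this] p_Kp x_Kx show ?thesis by blast
qed

lemma communities_disjoint:
  assumes st: "semitopology P Opn" and regular: "\<forall>p\<in>P. regular_point P Opn p"
    and "p \<in> P" "q \<in> P" and "community P Opn p \<noteq> community P Opn q"
  shows "community P Opn p \<inter> community P Opn q = {}"
  using assms community_eq_if_mem_community[OF st regular] by blast

lemma communities_cover:
  assumes "\<forall>p\<in>P. regular_point P Opn p"
  shows "\<Union>(community P Opn ` P) = P"
  using assms community_subset[of P Opn] unfolding regular_point_def by blast

theorem corollary4p19:
  fixes P :: "'a set" and Opn :: "'a set set"
  assumes "semitopology P Opn"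
  shows "((\<forall>p\<in>P. regular_point P Opn p) \<longleftrightarrow>
          (\<exists>\<T>. (\<forall>T\<in>\<T>. topen Opn T) \<and>
               (\<forall>T1\<in>\<T>. \<forall>T2\<in>\<T>. T1 \<noteq> T2 \<longrightarrow> T1 \<inter> T2 = {}) \<and> \<Union>\<T> = P))
       \<and> ((\<forall>p\<in>P. regular_point P Opn p) \<longleftrightarrow>
          (\<forall>X. X \<subseteq> P \<longrightarrow> (\<exists>\<T>. (\<forall>T\<in>\<T>. topen Opn T) \<and> X \<subseteq> \<Union>\<T>)))"
proof -
  let ?regular = "\<forall>p\<in>P. regular_point P Opn p"
  have partition: "\<exists>\<T>. (\<forall>T\<in>\<T>. topen Opn T) \<and>
      (\<forall>T1\<in>\<T>. \<forall>T2\<in>\<T>. T1 \<noteq> T2 \<longrightarrow> T1 \<inter> T2 = {}) \<and> \<Union>\<T> = P" if ?regular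
  proof (intro exI conjI)
    show "\<forall>T\<in>community P Opn ` P. topen Opn T"
      using that unfolding regular_point_def by blast
    show "\<forall>T1\<in>community P Opn ` P. \<forall>T2\<in>community P Opn ` P. T1 \<noteq> T2 \<longrightarrow> T1 \<inter> T2 = {}"
      using communities_disjoint[OF assms that] by blast
    show "\<Union>(community P Opn ` P) = P"
      using communities_cover[OF that] .
  qed
  have cover: "(\<forall>X. X \<subseteq> P \<longrightarrow> (\<exists>\<T>. (\<forall>T\<in>\<T>. topen Opn T) \<and> X \<subseteq> \<Union>\<T>))
      \<longleftrightarrow> P \<subseteq> \<Union>{T. topen Opn T}"
    by (metis (no_types, lifting) Sup_subset_mono dual_order.trans mem_Collect_eq subsetI order_refl)
  show ?thesis
    using partition cover all_regular_iff_covered_by_topens[OF assms] by blast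
qed

end
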